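(* Let $\mathcal{H}_A$ and $\mathcal{H}_B$ both have finite dimension $D$, let $|\psi\rangle\in\mathcal{H}_A\otimes\mathcal{H}_B$ be any vector, and let $A_k$ (operators on $\mathcal{H}_A$) and $B_k$ (operators on $\mathcal{H}_B$), $k=1,\dots,N$, be arbitrary. Let $R=\sum_{k=1}^N A_k^\dagger A_k\otimes B_k^\dagger B_k$ and $\|R\|=\sup_{\|\omega\|=1}\|R|\omega\rangle\|$ (its largest eigenvalue). Then for every $1\le n\le D$, $$\sum_{k=1}^N\chi_n\!\big(\mathrm{Tr}_A[(A_k\otimes B_k)|\psi\rangle\langle\psi|(A_k\otimes B_k)^\dagger]\big)\le\|R\|\,\chi_n\!\big(\mathrm{Tr}_A|\psi\rangle\langle\psi|\big).$$
   Context: For a Hermitian operator $T$ on a $D$-dimensional space, $\chi_n(T)$ denotes the sum of its $n$ smallest eigenvalues counted with multiplicity. $\mathrm{Tr}_A$ denotes the partial trace over $\mathcal{H}_A$, yielding an operator on $\mathcal{H}_B$. *)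

theory Defs
  imports "Jordan_Normal_Form.Char_Poly" "HOL-Library.Multiset"
begin

text \<open>Matrices are Jordan_Normal_Form complex matrices; the basis of
  H_A \<otimes> H_B (dims dA, dB) is indexed by i*dB + j for i < dA, j < dB.\<close>

definition adj :: "complex mat \<Rightarrow> complex mat" where
  "adj M = mat (dim_col M) (dim_row M) (\<lambda>(i,j). cnj (M $$ (j,i)))"

definition kron :: "complex mat \<Rightarrow> complex mat \<Rightarrow> complex mat" where
  "kron M P = mat (dim_row M * dim_row P) (dim_col M * dim_col P)
     (\<lambda>(i,j). M $$ (i div dim_row P, j div dim_col P) * P $$ (i mod dim_row P, j mod dim_col P))"

definition ptrace_A :: "nat \<Rightarrow> nat \<Rightarrow> complex mat \<Rightarrow> complex mat" where
  "ptrace_A dA dB M = mat dB dB (\<lambda>(j,j'). \<Sum>i<dA. M $$ (i*dB + j, i*dB + j'))"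

definition outer :: "complex vec \<Rightarrow> complex mat" where
  "outer v = mat (dim_vec v) (dim_vec v) (\<lambda>(i,j). v $ i * cnj (v $ j))"

definition msum :: "nat \<Rightarrow> ('k \<Rightarrow> complex mat) \<Rightarrow> 'k set \<Rightarrow> complex mat" where
  "msum d f K = mat d d (\<lambda>ij. \<Sum>k\<in>K. f k $$ ij)"

definition vnorm :: "complex vec \<Rightarrow> real" where
  "vnorm w = sqrt (\<Sum>i<dim_vec w. (cmod (w $ i))\<^sup>2)"

definition opnorm :: "complex mat \<Rightarrow> real" where
  "opnorm R = Sup {vnorm (R *\<^sub>v w) | w. w \<in> carrier_vec (dim_col R) \<and> vnorm w = 1}"

text \<open>Eigenvalues (with algebraic multiplicity = roots of the characteristic polynomial),
  as reals (real parts; the operators used are Hermitian), sorted increasingly.\<close>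
definition eigvals_sorted :: "complex mat \<Rightarrow> real list" where
  "eigvals_sorted T = sorted_list_of_multiset (image_mset Re (proots (char_poly T)))"

definition chi :: "nat \<Rightarrow> complex mat \<Rightarrow> real" where
  "chi n T = sum_list (take n (eigvals_sorted T))"

end

(* Write psi = sum_i |i> (x) psi_i with slices psi_i in H_B, so that rho = Tr_A |psi><psi| has
   the quadratic form <w|rho|w> = sum_i |<w|psi_i>|^2.  Diagonalise rho by an orthonormal
   eigenbasis u_j and let S be the indices of its n smallest eigenvalues.  Project every slice
   onto span {u_j | j in S}; the resulting vector eta satisfies
     (a) chi_n(rho) = ||eta||^2                       (the norm of eta counts exactly those eigenvalues);
     (b) chi_n(Tr_A [K |psi><psi| K^dag]) <= ||K eta||^2 for every product operator K = A (x) B: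
         pick n orthonormal vectors w_l orthogonal to all B u_j, j not in S; on them the slices of
         K psi and of K eta have the same overlaps, so Ky Fan's minimum principle and Bessel's
         inequality give the bound;
     (c) sum_k ||K_k eta||^2 = <eta|R|eta> <= ||R|| ||eta||^2  (Cauchy-Schwarz).
   Summing (b) over k and using (c) and (a) gives the theorem. *)
theory Submission
  imports Defs "HOL-Combinatorics.List_Permutation"
    "HOL-Computational_Algebra.Fundamental_Theorem_Algebra"
begin

definition ip :: "complex vec \<Rightarrow> complex vec \<Rightarrow> complex" where
  "ip x y = (\<Sum>i<dim_vec y. cnj (x $ i) * y $ i)"

definition nsq :: "complex vec \<Rightarrow> real" where
  "nsq x = (\<Sum>i<dim_vec x. (cmod (x $ i))^2)"

lemma cnj_mult_self: "cnj z * z = complex_of_real ((cmod z)^2)"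
  by (metis complex_norm_square mult.commute of_real_power)

lemma ip_self: "ip x x = complex_of_real (nsq x)"
  unfolding ip_def nsq_def by (simp add: cnj_mult_self)

lemma nsq_nonneg: "nsq x \<ge> 0"
  unfolding nsq_def by (auto intro: sum_nonneg)

lemma ip_cnj: "dim_vec x = dim_vec y \<Longrightarrow> ip y x = cnj (ip x y)"
  unfolding ip_def by (simp add: mult.commute)

lemma ip_orth_sym: "dim_vec x = dim_vec y \<Longrightarrow> ip x y = 0 \<Longrightarrow> ip y x = 0"
  using ip_cnj[of x y] by simp

lemma ip_smult_right: "ip x (c \<cdot>\<^sub>v y) = c * ip x y"
  unfolding ip_def by (simp add: sum_distrib_left ac_simps)

lemma ip_smult_left: "dim_vec x = dim_vec y \<Longrightarrow> ip (c \<cdot>\<^sub>v x) y = cnj c * ip x y"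
  unfolding ip_def by (simp add: sum_distrib_left ac_simps)

lemma nsq_smult: "nsq (c \<cdot>\<^sub>v x) = (cmod c)^2 * nsq x"
  unfolding nsq_def by (simp add: sum_distrib_left norm_mult power_mult_distrib)

lemma ip_lin_right:
  assumes "\<And>j. j \<in> J \<Longrightarrow> dim_vec (u j) = D" "dim_vec x = D" "finite J"
  shows "ip x (vec D (\<lambda>i. \<Sum>j\<in>J. c j * u j $ i)) = (\<Sum>j\<in>J. c j * ip x (u j))"
  unfolding ip_def using assms
  by (simp add: sum_distrib_left sum_distrib_right ac_simps sum.swap[of _ J])

lemma ip_lin_left:
  assumes "\<And>j. j \<in> J \<Longrightarrow> dim_vec (u j) = D" "dim_vec y = D" "finite J"
  shows "ip (vec D (\<lambda>i. \<Sum>j\<in>J. c j * u j $ i)) y = (\<Sum>j\<in>J. cnj (c j) * ip (u j) y)"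
  unfolding ip_def using assms
  by (simp add: sum_distrib_left sum_distrib_right ac_simps sum.swap[of _ J])

lemma nsq_zero_iff:
  assumes "x \<in> carrier_vec D"
  shows "nsq x = 0 \<longleftrightarrow> x = 0\<^sub>v D"
proof
  assume "nsq x = 0"
  hence "\<forall>i\<in>{..<D}. (cmod (x $ i))^2 = 0"
    using assms unfolding nsq_def by (subst sum_nonneg_eq_0_iff[symmetric]) auto
  thus "x = 0\<^sub>v D" using assms by (intro eq_vecI) auto
qed (simp add: nsq_def)

lemma nsq_pos: "x \<in> carrier_vec D \<Longrightarrow> x \<noteq> 0\<^sub>v D \<Longrightarrow> nsq x > 0"
  using nsq_zero_iff[of x D] nsq_nonneg[of x] by linarith

lemma ip_normalized:
  assumes "nsq x > 0"
  defines "c \<equiv> complex_of_real (1 / sqrt (nsq x))"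
  shows "ip (c \<cdot>\<^sub>v x) (c \<cdot>\<^sub>v x) = 1"
proof -
  have "(cmod c)^2 = 1 / nsq x" using assms
    by (simp add: norm_divide power_divide real_sqrt_pow2 less_imp_le)
  thus ?thesis unfolding ip_self nsq_smult using assms by simp
qed

lemma mult_mat_vec_index:
  assumes "H \<in> carrier_mat m D" "x \<in> carrier_vec D" "i < m"
  shows "(H *\<^sub>v x) $ i = (\<Sum>j<D. H $$ (i,j) * x $ j)"
  using assms by (simp add: scalar_prod_def atLeast0LessThan)

lemma mat_vec_lin:
  fixes H :: "complex mat"
  assumes H: "H \<in> carrier_mat D D" and u: "\<And>j. j \<in> J \<Longrightarrow> u j \<in> carrier_vec D" and J: "finite J"
  shows "H *\<^sub>v vec D (\<lambda>i. \<Sum>j\<in>J. c j * u j $ i) = vec D (\<lambda>i. \<Sum>j\<in>J. c j * (H *\<^sub>v u j) $ i)"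
proof (rule eq_vecI)
  fix i assume "i < dim_vec (vec D (\<lambda>i. \<Sum>j\<in>J. c j * (H *\<^sub>v u j) $ i))"
  hence i: "i < D" by simp
  have "(H *\<^sub>v vec D (\<lambda>i. \<Sum>j\<in>J. c j * u j $ i)) $ i = (\<Sum>k<D. \<Sum>j\<in>J. c j * (H $$ (i,k) * u j $ k))"
    using H i by (simp add: mult_mat_vec_index sum_distrib_left ac_simps del: index_mult_mat_vec)
  also have "\<dots> = (\<Sum>j\<in>J. c j * (H *\<^sub>v u j) $ i)"
    using H i u by (subst sum.swap)
      (simp add: mult_mat_vec_index sum_distrib_left del: index_mult_mat_vec)
  finally show "(H *\<^sub>v vec D (\<lambda>i. \<Sum>j\<in>J. c j * u j $ i)) $ i = vec D (\<lambda>i. \<Sum>j\<in>J. c j * (H *\<^sub>v u j) $ i) $ i"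
    using i by simp
qed (use H in simp)

definition orthonormal :: "nat \<Rightarrow> nat \<Rightarrow> (nat \<Rightarrow> complex vec) \<Rightarrow> bool" where
  "orthonormal D n u \<longleftrightarrow> (\<forall>l<n. u l \<in> carrier_vec D) \<and>
     (\<forall>l<n. \<forall>l'<n. ip (u l) (u l') = (if l = l' then 1 else 0))"

lemma orthonormal_carrier: "orthonormal D n u \<Longrightarrow> l < n \<Longrightarrow> u l \<in> carrier_vec D"
  unfolding orthonormal_def by auto

lemma orthonormal_ip: "orthonormal D n u \<Longrightarrow> l < n \<Longrightarrow> l' < n \<Longrightarrow> ip (u l) (u l') = (if l = l' then 1 else 0)"
  unfolding orthonormal_def by auto

lemma orthonormal_extend:
  assumes u: "orthonormal D r u" and y: "y \<in> carrier_vec D" "ip y y = 1"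
    and uy: "\<forall>j<r. ip (u j) y = 0"
  shows "orthonormal D (Suc r) (u(r := y))"
proof -
  have yu: "ip y (u j) = 0" if "j < r" for j
    using uy that ip_orth_sym[of "u j" y] orthonormal_carrier[OF u] y by auto
  show ?thesis unfolding orthonormal_def
  proof (intro conjI allI impI)
    fix l assume "l < Suc r" thus "(u(r := y)) l \<in> carrier_vec D"
      using orthonormal_carrier[OF u] y by (cases "l = r") auto
  next
    fix l l' assume "l < Suc r" "l' < Suc r"
    thus "ip ((u(r := y)) l) ((u(r := y)) l') = (if l = l' then 1 else 0)"
      using orthonormal_ip[OF u] y uy yu by (cases "l = r"; cases "l' = r") auto
  qed
qed

text \<open>Fewer than \<open>D\<close> vectors in \<open>\<complex>^D\<close> have a common nonzero orthogonal vector: a kernel vector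
  of the singular matrix whose rows are their conjugates (padded with a zero row).\<close>

lemma exists_orth:
  assumes "r < D" "\<forall>l<r. z l \<in> carrier_vec D"
  shows "\<exists>x. x \<in> carrier_vec D \<and> x \<noteq> 0\<^sub>v D \<and> (\<forall>l<r. ip (z l) x = 0)"
proof -
  define c where "c = (\<lambda>i. if i < r then vec D (\<lambda>k. cnj (z i $ k)) else 0\<^sub>v D)"
  define Z where "Z = mat\<^sub>r D D (\<lambda>i. if i = r then 0\<^sub>v D else c i)"
  have "det Z = 0" unfolding Z_def by (rule det_row_0) (use assms in \<open>auto simp: c_def\<close>)
  moreover have Zc: "Z \<in> carrier_mat D D" unfolding Z_def by simp
  ultimately obtain v where v: "v \<in> carrier_vec D" "v \<noteq> 0\<^sub>v D" "Z *\<^sub>v v = 0\<^sub>v D"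
    using det_0_iff_vec_prod_zero by blast
  have "ip (z l) v = 0" if l: "l < r" for l
  proof -
    have "row Z l = c l" unfolding Z_def using l assms
      by (subst row_mat_of_row_fun) (auto simp: c_def)
    hence "(Z *\<^sub>v v) $ l = c l \<bullet> v" using l assms Zc by simp
    moreover have "c l \<bullet> v = ip (z l) v" using l v assms unfolding c_def ip_def scalar_prod_def
      by (auto intro: sum.cong)
    ultimately show ?thesis using v l assms by simp
  qed
  thus ?thesis using v by blast
qed

lemma orth_ext:
  assumes "n + m \<le> D" "\<forall>j<m. z j \<in> carrier_vec D"
  shows "\<exists>w. orthonormal D n w \<and> (\<forall>l<n. \<forall>j<m. ip (w l) (z j) = 0)"
  using assms(1)
proof (induction n)
  case 0 thus ?case by (auto simp: orthonormal_def)
next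
  case (Suc n)
  then obtain w where w: "orthonormal D n w" and wz: "\<forall>l<n. \<forall>j<m. ip (w l) (z j) = 0" by auto
  define z' where "z' = (\<lambda>t. if t < m then z t else w (t - m))"
  have "\<forall>l<m+n. z' l \<in> carrier_vec D"
    using assms(2) orthonormal_carrier[OF w] by (auto simp: z'_def)
  moreover have "m + n < D" using Suc.prems by simp
  ultimately obtain x where x: "x \<in> carrier_vec D" "x \<noteq> 0\<^sub>v D" and xz: "\<forall>l<m+n. ip (z' l) x = 0"
    using exists_orth by blast
  define y where "y = complex_of_real (1 / sqrt (nsq x)) \<cdot>\<^sub>v x"
  have y: "y \<in> carrier_vec D" "ip y y = 1"
    using x nsq_pos[OF x] ip_normalized unfolding y_def by auto
  have zy: "ip (z j) y = 0" if "j < m" for j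
    using xz[rule_format, of j] that unfolding y_def z'_def by (simp add: ip_smult_right)
  have wy: "ip (w l) y = 0" if "l < n" for l
    using xz[rule_format, of "m + l"] that unfolding y_def z'_def by (simp add: ip_smult_right)
  have "orthonormal D (Suc n) (w(n := y))" using orthonormal_extend[OF w y] wy by blast
  moreover have "ip y (z j) = 0" if "j < m" for j
    using ip_orth_sym[OF _ zy[OF that]] assms(2) that y by auto
  hence "\<forall>l<Suc n. \<forall>j<m. ip ((w(n := y)) l) (z j) = 0" using wz by (auto simp: less_Suc_eq)
  ultimately show ?case by blast
qed

lemma orth_complete:
  assumes w: "orthonormal D n w" and n: "n \<le> D"
  shows "\<exists>e. orthonormal D D e \<and> (\<forall>t<n. e t = w t)"
proof -
  obtain w2 where w2: "orthonormal D (D - n) w2" and w2w: "\<forall>l<D-n. \<forall>j<n. ip (w2 l) (w j) = 0"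
    using orth_ext[of "D - n" n D w] n orthonormal_carrier[OF w] by auto
  have ww2: "ip (w j) (w2 l) = 0" if "l < D - n" "j < n" for l j
    using w2w that ip_orth_sym[of "w2 l" "w j"] orthonormal_carrier[OF w2, of l]
      orthonormal_carrier[OF w, of j] by auto
  define e where "e = (\<lambda>t. if t < n then w t else w2 (t - n))"
  have "orthonormal D D e"
    unfolding orthonormal_def
  proof (intro conjI allI impI)
    fix l assume "l < D" thus "e l \<in> carrier_vec D"
      using orthonormal_carrier[OF w] orthonormal_carrier[OF w2] unfolding e_def by auto
  next
    fix l l' assume l: "l < D" "l' < D"
    have "(l - n = l' - n) = (l = l')" if "\<not> l < n" "\<not> l' < n" using that by auto
    thus "ip (e l) (e l') = (if l = l' then 1 else 0)"
      using orthonormal_ip[OF w] orthonormal_ip[OF w2] ww2 w2w l unfolding e_def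
      by (cases "l < n"; cases "l' < n") auto
  qed
  thus ?thesis unfolding e_def by auto
qed

lemma orthonormal_basis_unitary:
  assumes e: "orthonormal D D e"
  defines "E \<equiv> mat D D (\<lambda>(i,t). e t $ i)" and "Eh \<equiv> mat D D (\<lambda>(t,i). cnj (e t $ i))"
  shows "E * Eh = 1\<^sub>m D" "Eh * E = 1\<^sub>m D"
proof -
  have Ec: "E \<in> carrier_mat D D" "Eh \<in> carrier_mat D D" by (simp_all add: E_def Eh_def)
  show EhE: "Eh * E = 1\<^sub>m D"
  proof (rule eq_matI)
    fix a b assume ab: "a < dim_row (1\<^sub>m D)" "b < dim_col (1\<^sub>m D)"
    have "(Eh * E) $$ (a,b) = ip (e a) (e b)"
      using ab orthonormal_carrier[OF e, of b]
      by (simp add: Eh_def E_def scalar_prod_def atLeast0LessThan ip_def)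
    also have "\<dots> = 1\<^sub>m D $$ (a,b)" using orthonormal_ip[OF e] ab by auto
    finally show "(Eh * E) $$ (a,b) = 1\<^sub>m D $$ (a,b)" .
  qed (auto simp: Eh_def E_def)
  show "E * Eh = 1\<^sub>m D" using mat_mult_left_right_inverse[OF Ec(2) Ec(1) EhE] .
qed

lemma basis_expansion:
  assumes e: "orthonormal D D e" and x: "x \<in> carrier_vec D"
  shows "x = vec D (\<lambda>i. \<Sum>t<D. ip (e t) x * e t $ i)"
proof -
  define E where "E = mat D D (\<lambda>(i,t). e t $ i)"
  define Eh where "Eh = mat D D (\<lambda>(t,i). cnj (e t $ i))"
  have Ec: "E \<in> carrier_mat D D" "Eh \<in> carrier_mat D D" by (simp_all add: E_def Eh_def)
  have "x = (E * Eh) *\<^sub>v x"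
    using x orthonormal_basis_unitary[OF e] unfolding E_def Eh_def by simp
  also have "\<dots> = E *\<^sub>v (Eh *\<^sub>v x)" using Ec x by (simp add: assoc_mult_mat_vec)
  also have "\<dots> = vec D (\<lambda>i. \<Sum>t<D. ip (e t) x * e t $ i)"
    using x Ec by (intro eq_vecI)
      (simp_all add: E_def Eh_def scalar_prod_def atLeast0LessThan ip_def mult.commute)
  finally show ?thesis .
qed

lemma ip_expand:
  assumes e: "orthonormal D D e" and x: "x \<in> carrier_vec D" and y: "y \<in> carrier_vec D"
  shows "ip x y = (\<Sum>t<D. cnj (ip (e t) x) * ip (e t) y)"
proof -
  have ec: "\<And>t. t \<in> {..<D} \<Longrightarrow> dim_vec (e t) = D" using orthonormal_carrier[OF e] by auto
  have "ip x y = ip x (vec D (\<lambda>i. \<Sum>t<D. ip (e t) y * e t $ i))"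
    using basis_expansion[OF e y] by simp
  also have "\<dots> = (\<Sum>t<D. ip (e t) y * ip x (e t))"
    by (rule ip_lin_right) (use ec x in auto)
  also have "\<dots> = (\<Sum>t<D. cnj (ip (e t) x) * ip (e t) y)"
    by (intro sum.cong refl) (use ec x ip_cnj[of "e _" x] in auto)
  finally show ?thesis .
qed

lemma parseval:
  assumes e: "orthonormal D D e" and x: "x \<in> carrier_vec D"
  shows "nsq x = (\<Sum>t<D. (cmod (ip (e t) x))^2)"
proof -
  have "complex_of_real (nsq x) = (\<Sum>t<D. cnj (ip (e t) x) * ip (e t) x)"
    using ip_expand[OF e x x] ip_self by simp
  also have "\<dots> = complex_of_real (\<Sum>t<D. (cmod (ip (e t) x))^2)"
    by (simp add: cnj_mult_self)
  finally show ?thesis by (simp only: of_real_eq_iff)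
qed

lemma bessel:
  assumes w: "orthonormal D n w" and n: "n \<le> D" and x: "x \<in> carrier_vec D"
  shows "(\<Sum>l<n. (cmod (ip (w l) x))^2) \<le> nsq x"
proof -
  obtain e where e: "orthonormal D D e" "\<forall>t<n. e t = w t" using orth_complete[OF w n] by blast
  have "(\<Sum>l<n. (cmod (ip (w l) x))^2) = (\<Sum>l<n. (cmod (ip (e l) x))^2)"
    using e(2) by simp
  also have "\<dots> \<le> (\<Sum>l<D. (cmod (ip (e l) x))^2)"
    by (rule sum_mono2) (use n in auto)
  also have "\<dots> = nsq x" using parseval[OF e(1) x] by simp
  finally show ?thesis .
qed

text \<open>Cauchy-Schwarz, as Bessel's inequality for the single unit vector \<open>x / \<parallel>x\<parallel>\<close>.\<close>

lemma cauchy_schwarz: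
  assumes x: "x \<in> carrier_vec m" and y: "y \<in> carrier_vec m"
  shows "(cmod (ip x y))^2 \<le> nsq x * nsq y"
proof (cases "nsq x = 0")
  case True
  hence "ip x y = 0" using nsq_zero_iff[OF x] y unfolding ip_def by simp
  thus ?thesis by (simp add: nsq_nonneg)
next
  case False
  hence nx: "nsq x > 0" using nsq_nonneg[of x] by simp
  have m: "1 \<le> m" using False x unfolding nsq_def by (cases m) auto
  define c where "c = complex_of_real (1 / sqrt (nsq x))"
  have "orthonormal m 1 (\<lambda>_. c \<cdot>\<^sub>v x)"
    unfolding orthonormal_def c_def using x ip_normalized[OF nx] by auto
  hence "(cmod (ip (c \<cdot>\<^sub>v x) y))^2 \<le> nsq y" using bessel[OF _ m y] by simp
  moreover have "(cmod (ip (c \<cdot>\<^sub>v x) y))^2 = (cmod (ip x y))^2 / nsq x"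
    using nx x y unfolding c_def
    by (simp add: ip_smult_left norm_mult norm_divide power_mult_distrib power_divide
        real_sqrt_pow2 less_imp_le)
  ultimately show ?thesis using nx by (simp add: divide_le_eq mult.commute)
qed

lemma nsq_comb:
  assumes u: "orthonormal D D u" and J: "J \<subseteq> {..<D}"
  shows "nsq (vec D (\<lambda>b. \<Sum>j\<in>J. c j * u j $ b)) = (\<Sum>j\<in>J. (cmod (c j))^2)"
proof -
  let ?v = "vec D (\<lambda>b. \<Sum>j\<in>J. c j * u j $ b)"
  have fJ: "finite J" using J finite_subset by blast
  have uc: "\<And>j. j \<in> J \<Longrightarrow> dim_vec (u j) = D" using orthonormal_carrier[OF u] J by auto
  have uv: "ip (u j) ?v = c j" if j: "j \<in> J" for j
  proof -
    have "ip (u j) ?v = (\<Sum>j'\<in>J. c j' * ip (u j) (u j'))"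
      by (rule ip_lin_right) (use uc fJ j in auto)
    also have "\<dots> = (\<Sum>j'\<in>J. c j' * (if j = j' then 1 else 0))"
      using orthonormal_ip[OF u] J j by (intro sum.cong refl) (auto simp: subset_iff)
    also have "\<dots> = c j" using j fJ by (simp add: if_distrib cong: if_cong)
    finally show ?thesis .
  qed
  have "complex_of_real (nsq ?v) = (\<Sum>j\<in>J. cnj (c j) * ip (u j) ?v)"
    unfolding ip_self[symmetric] by (rule ip_lin_left) (use uc fJ in auto)
  also have "\<dots> = (\<Sum>j\<in>J. complex_of_real ((cmod (c j))^2))" using uv by (simp add: cnj_mult_self)
  finally show ?thesis by (simp only: of_real_sum[symmetric] of_real_eq_iff)
qed

section \<open>The spectral theorem for Hermitian matrices\<close>

definition herm :: "nat \<Rightarrow> complex mat \<Rightarrow> bool" where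
  "herm D H \<longleftrightarrow> H \<in> carrier_mat D D \<and> (\<forall>i<D. \<forall>j<D. H $$ (i,j) = cnj (H $$ (j,i)))"

lemma herm_carrier: "herm D H \<Longrightarrow> H \<in> carrier_mat D D"
  unfolding herm_def by simp

lemma ip_herm:
  assumes h: "herm D H" and x: "x \<in> carrier_vec D" and y: "y \<in> carrier_vec D"
  shows "ip (H *\<^sub>v x) y = ip x (H *\<^sub>v y)"
proof -
  have H: "H \<in> carrier_mat D D" using h by (rule herm_carrier)
  have hs: "\<And>i j. i < D \<Longrightarrow> j < D \<Longrightarrow> cnj (H $$ (i,j)) = H $$ (j,i)"
    using h unfolding herm_def by (metis complex_cnj_cnj)
  have "ip (H *\<^sub>v x) y = (\<Sum>i<D. \<Sum>j<D. cnj (H$$(i,j)) * cnj (x$j) * y$i)"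
    unfolding ip_def using y H x
    by (simp add: mult_mat_vec_index sum_distrib_right del: index_mult_mat_vec)
  also have "\<dots> = (\<Sum>i<D. \<Sum>j<D. cnj (x $ j) * (H $$ (j,i) * y $ i))"
    by (intro sum.cong refl) (simp add: hs)
  also have "\<dots> = (\<Sum>j<D. cnj (x$j) * (\<Sum>i<D. H$$(j,i) * y$i))"
    by (subst sum.swap) (simp add: sum_distrib_left)
  also have "\<dots> = ip x (H *\<^sub>v y)"
    unfolding ip_def using y H x by (simp add: mult_mat_vec_index del: index_mult_mat_vec)
  finally show ?thesis .
qed

lemma herm_eigenvalue_real:
  assumes h: "herm D H" and v: "v \<in> carrier_vec D" "v \<noteq> 0\<^sub>v D" and Hv: "H *\<^sub>v v = \<mu> \<cdot>\<^sub>v v"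
  shows "\<mu> = complex_of_real (Re \<mu>)"
proof -
  have "\<mu> * ip v v = ip v (H *\<^sub>v v)" unfolding Hv by (simp add: ip_smult_right)
  also have "\<dots> = ip (H *\<^sub>v v) v" using ip_herm[OF h v(1) v(1)] by simp
  also have "\<dots> = cnj \<mu> * ip v v" unfolding Hv by (simp add: ip_smult_left)
  finally have "\<mu> * ip v v = cnj \<mu> * ip v v" .
  moreover have "ip v v \<noteq> 0" using nsq_pos[OF v] ip_self[of v] by simp
  ultimately have "cnj \<mu> = \<mu>" by (metis mult_cancel_right)
  thus ?thesis by (simp add: complex_eq_iff)
qed

lemma eig_exists:
  assumes A: "(A :: complex mat) \<in> carrier_mat m m" and m: "0 < m"
  shows "\<exists>k v. eigenvector A v k"
proof -
  have "degree (char_poly A) = m" using degree_monic_char_poly[OF A] by simp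
  hence "\<not> constant (poly (char_poly A))" using m constant_degree[of "char_poly A"] by auto
  then obtain z where "poly (char_poly A) z = 0" using fundamental_theorem_of_algebra by blast
  hence "eigenvalue A z" using eigenvalue_root_char_poly[OF A] by simp
  thus ?thesis unfolding eigenvalue_def by blast
qed

lemma sum_split_nat: "(\<Sum>t<r+k. f t) = (\<Sum>t<r. f t) + (\<Sum>a<k. f (r+a))" for r k :: nat
  by (induction k) (auto simp: add.assoc)

lemma complement_invariant:
  assumes h: "herm D H" and e: "orthonormal D D e" and r: "r \<le> D"
    and ev: "\<forall>j<r. H *\<^sub>v e j = complex_of_real (lam j) \<cdot>\<^sub>v e j" and b: "b < D - r"
  shows "H *\<^sub>v e (r+b) = vec D (\<lambda>i. \<Sum>a<D-r. ip (e (r+a)) (H *\<^sub>v e (r+b)) * e (r+a) $ i)"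
proof -
  have H: "H \<in> carrier_mat D D" using h by (rule herm_carrier)
  have ec: "\<And>t. t < D \<Longrightarrow> e t \<in> carrier_vec D" using orthonormal_carrier[OF e] .
  have rb: "r + b < D" using b by linarith
  have Hwc: "H *\<^sub>v e (r+b) \<in> carrier_vec D" using H ec[OF rb] by simp
  have orth: "ip (e t) (H *\<^sub>v e (r+b)) = 0" if t: "t < r" for t
  proof -
    have "ip (e t) (H *\<^sub>v e (r+b)) = ip (H *\<^sub>v e t) (e (r+b))"
      using ip_herm[OF h ec ec[OF rb]] t r by simp
    also have "\<dots> = cnj (complex_of_real (lam t)) * ip (e t) (e (r+b))"
    proof -
      have "dim_vec (e t) = dim_vec (e (r+b))" using ec[of t] ec[OF rb] t r by simp
      thus ?thesis using ev t by (simp add: ip_smult_left)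
    qed
    also have "\<dots> = 0" using orthonormal_ip[OF e, of t "r+b"] t rb by simp
    finally show ?thesis .
  qed
  have "H *\<^sub>v e (r+b) = vec D (\<lambda>i. \<Sum>t<r + (D-r). ip (e t) (H *\<^sub>v e (r+b)) * e t $ i)"
    using basis_expansion[OF e Hwc] r by simp
  also have "\<dots> = vec D (\<lambda>i. \<Sum>a<D-r. ip (e (r+a)) (H *\<^sub>v e (r+b)) * e (r+a) $ i)"
    unfolding sum_split_nat using orth by simp
  finally show ?thesis .
qed

lemma lift_eigvec:
  fixes H :: "complex mat"
  assumes H: "H \<in> carrier_mat D D" and w: "\<And>a. a < m \<Longrightarrow> w a \<in> carrier_vec D"
    and Hw: "\<And>b. b < m \<Longrightarrow> H *\<^sub>v w b = vec D (\<lambda>i. \<Sum>a<m. Hp $$ (a,b) * w a $ i)"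
    and Hp: "Hp \<in> carrier_mat m m" and x: "x \<in> carrier_vec m" "Hp *\<^sub>v x = \<mu> \<cdot>\<^sub>v x"
  shows "H *\<^sub>v vec D (\<lambda>i. \<Sum>a<m. x $ a * w a $ i) = \<mu> \<cdot>\<^sub>v vec D (\<lambda>i. \<Sum>a<m. x $ a * w a $ i)"
proof -
  have Hpx: "(\<Sum>a<m. Hp $$ (b,a) * x $ a) = \<mu> * x $ b" if b: "b < m" for b
    using x b Hp mult_mat_vec_index[OF Hp x(1) b] by (metis carrier_vecD index_smult_vec(1))
  have "H *\<^sub>v vec D (\<lambda>i. \<Sum>a<m. x $ a * w a $ i) = vec D (\<lambda>i. \<Sum>a<m. x $ a * (H *\<^sub>v w a) $ i)"
    by (rule mat_vec_lin) (use H w in auto)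
  also have "\<dots> = vec D (\<lambda>i. \<Sum>a<m. \<Sum>b<m. Hp $$ (b,a) * x $ a * w b $ i)"
    by (intro eq_vecI) (auto simp: Hw sum_distrib_left ac_simps intro!: sum.cong)
  also have "\<dots> = vec D (\<lambda>i. \<Sum>b<m. (\<Sum>a<m. Hp $$ (b,a) * x $ a) * w b $ i)"
    by (subst sum.swap) (simp add: sum_distrib_right)
  also have "\<dots> = vec D (\<lambda>i. \<Sum>b<m. (\<mu> * x $ b) * w b $ i)"
    using Hpx by (intro eq_vecI) (auto intro!: sum.cong)
  also have "\<dots> = \<mu> \<cdot>\<^sub>v vec D (\<lambda>i. \<Sum>a<m. x $ a * w a $ i)"
    by (intro eq_vecI) (auto simp: sum_distrib_left ac_simps)
  finally show ?thesis .
qed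

lemma herm_eigvec_orth:
  assumes h: "herm D H" and e: "orthonormal D D e" and r: "r < D"
    and ev: "\<forall>j<r. H *\<^sub>v e j = complex_of_real (lam j) \<cdot>\<^sub>v e j"
  shows "\<exists>v \<mu>. v \<in> carrier_vec D \<and> v \<noteq> 0\<^sub>v D \<and> H *\<^sub>v v = \<mu> \<cdot>\<^sub>v v \<and> (\<forall>j<r. ip (e j) v = 0)"
proof -
  have ec: "\<And>t. t < D \<Longrightarrow> e t \<in> carrier_vec D" using orthonormal_carrier[OF e] .
  define Hp where "Hp = mat (D-r) (D-r) (\<lambda>(a,b). ip (e (r+a)) (H *\<^sub>v e (r+b)))"
  have Hpc: "Hp \<in> carrier_mat (D-r) (D-r)" by (simp add: Hp_def)
  obtain \<mu> x where "eigenvector Hp x \<mu>" using eig_exists[OF Hpc] r by auto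
  hence x: "x \<in> carrier_vec (D-r)" "x \<noteq> 0\<^sub>v (D-r)" "Hp *\<^sub>v x = \<mu> \<cdot>\<^sub>v x"
    unfolding eigenvector_def using Hpc by auto
  define v where "v = vec D (\<lambda>i. \<Sum>a<D-r. x $ a * e (r+a) $ i)"
  have ipv: "ip (e t) v = (\<Sum>a<D-r. x $ a * ip (e t) (e (r+a)))" if "t < D" for t
    unfolding v_def by (rule ip_lin_right) (use ec that in auto)
  have "H *\<^sub>v v = \<mu> \<cdot>\<^sub>v v" unfolding v_def
  proof (rule lift_eigvec[OF herm_carrier[OF h] _ _ Hpc x(1,3)])
    show "\<And>b. b < D - r \<Longrightarrow> H *\<^sub>v e (r+b) = vec D (\<lambda>i. \<Sum>a<D-r. Hp $$ (a,b) * e (r+a) $ i)"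
      using complement_invariant[OF h e _ ev] r by (simp add: Hp_def)
  qed (use ec in auto)
  moreover have "ip (e j) v = 0" if "j < r" for j
    using ipv[of j] orthonormal_ip[OF e] that r by simp
  moreover have "v \<noteq> 0\<^sub>v D"
  proof
    assume "v = 0\<^sub>v D"
    have "x $ b = ip (e (r+b)) v" if "b < D - r" for b
      using ipv[of "r+b"] orthonormal_ip[OF e] that r x(1)
      by (simp add: if_distrib cong: if_cong)
    hence "x = 0\<^sub>v (D-r)" using \<open>v = 0\<^sub>v D\<close> x(1) by (intro eq_vecI) (auto simp: ip_def)
    thus False using x(2) by simp
  qed
  moreover have "v \<in> carrier_vec D" unfolding v_def by simp
  ultimately show ?thesis by blast
qed

lemma spectral_partial:
  assumes h: "herm D H" and r: "r \<le> D"
  shows "\<exists>u lam. orthonormal D r u \<and> (\<forall>j<r. H *\<^sub>v u j = complex_of_real (lam j) \<cdot>\<^sub>v u j)"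
  using r
proof (induction r)
  case 0 thus ?case by (auto simp: orthonormal_def)
next
  case (Suc r)
  then obtain u lam where u: "orthonormal D r u"
    and ev: "\<forall>j<r. H *\<^sub>v u j = complex_of_real (lam j) \<cdot>\<^sub>v u j" by auto
  obtain e where e: "orthonormal D D e" and eu: "\<forall>t<r. e t = u t"
    using orth_complete[OF u] Suc.prems by auto
  obtain v \<mu> where v: "v \<in> carrier_vec D" "v \<noteq> 0\<^sub>v D" and Hv: "H *\<^sub>v v = \<mu> \<cdot>\<^sub>v v"
    and uv: "\<forall>j<r. ip (u j) v = 0"
    using herm_eigvec_orth[OF h e _, of r lam] Suc.prems ev eu by auto
  define c where "c = complex_of_real (1 / sqrt (nsq v))"
  have y: "c \<cdot>\<^sub>v v \<in> carrier_vec D" "ip (c \<cdot>\<^sub>v v) (c \<cdot>\<^sub>v v) = 1"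
    using v ip_normalized[OF nsq_pos[OF v]] unfolding c_def by auto
  have Hy: "H *\<^sub>v (c \<cdot>\<^sub>v v) = complex_of_real (Re \<mu>) \<cdot>\<^sub>v (c \<cdot>\<^sub>v v)"
    using herm_eigenvalue_real[OF h v Hv] herm_carrier[OF h] v Hv
    by (metis mult_mat_vec smult_smult_assoc mult.commute)
  have "orthonormal D (Suc r) (u(r := c \<cdot>\<^sub>v v))"
    using orthonormal_extend[OF u y] uv by (simp add: ip_smult_right)
  moreover have "\<forall>j<Suc r. H *\<^sub>v (u(r := c \<cdot>\<^sub>v v)) j
      = complex_of_real ((lam(r := Re \<mu>)) j) \<cdot>\<^sub>v (u(r := c \<cdot>\<^sub>v v)) j"
    using ev Hy by (auto simp: less_Suc_eq)
  ultimately show ?case by blast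
qed

lemma spectral:
  assumes h: "herm D H"
  shows "\<exists>u lam. orthonormal D D u \<and> (\<forall>j<D. H *\<^sub>v u j = complex_of_real (lam j) \<cdot>\<^sub>v u j)"
  using spectral_partial[OF h le_refl] .

text \<open>An orthonormal eigenbasis diagonalises \<open>H\<close> unitarily, so the characteristic polynomial
  is the product of the linear factors of the eigenvalues.\<close>

lemma charpoly_spec:
  assumes H: "H \<in> carrier_mat D D" and u: "orthonormal D D u"
    and ev: "\<forall>j<D. H *\<^sub>v u j = complex_of_real (lam j) \<cdot>\<^sub>v u j"
  shows "char_poly H = (\<Prod>a\<leftarrow>map (\<lambda>j. complex_of_real (lam j)) [0..<D]. [:-a, 1:])"
proof -
  define E where "E = mat D D (\<lambda>(i,t). u t $ i)"
  define Eh where "Eh = mat D D (\<lambda>(t,i). cnj (u t $ i))"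
  define L where "L = mat D D (\<lambda>(i,j). if i = j then complex_of_real (lam i) else 0)"
  have Ec: "E \<in> carrier_mat D D" "Eh \<in> carrier_mat D D" "L \<in> carrier_mat D D"
    by (simp_all add: E_def Eh_def L_def)
  have EE: "E * Eh = 1\<^sub>m D" "Eh * E = 1\<^sub>m D"
    using orthonormal_basis_unitary[OF u] unfolding E_def Eh_def by auto
  have HE: "H * E = E * L"
  proof (rule eq_matI)
    fix i t assume it: "i < dim_row (E * L)" "t < dim_col (E * L)"
    hence i: "i < D" and t: "t < D" using Ec by auto
    have uc: "u t \<in> carrier_vec D" using orthonormal_carrier[OF u t] .
    have "(H * E) $$ (i,t) = (H *\<^sub>v u t) $ i"
      using H i t uc by (simp add: E_def scalar_prod_def atLeast0LessThan)
    also have "\<dots> = (E * L) $$ (i,t)"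
      using ev i t uc by (simp add: E_def L_def scalar_prod_def atLeast0LessThan if_distrib cong: if_cong)
    finally show "(H * E) $$ (i,t) = (E * L) $$ (i,t)" .
  qed (use H Ec in auto)
  have "H = H * (E * Eh)" using EE H by simp
  also have "\<dots> = (H * E) * Eh" using H Ec by (simp add: assoc_mult_mat)
  also have "\<dots> = E * L * Eh" unfolding HE ..
  finally have "H = E * L * Eh" .
  hence "similar_mat H L" using EE H Ec by (intro similar_matI[of H L E Eh D]) auto
  hence "char_poly H = char_poly L" by (rule char_poly_similar)
  also have "\<dots> = (\<Prod>a\<leftarrow>diag_mat L. [:-a, 1:])"
    by (rule char_poly_upper_triangular[OF Ec(3)]) (simp add: upper_triangular_def L_def)
  also have "diag_mat L = map (\<lambda>j. complex_of_real (lam j)) [0..<D]"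
    unfolding diag_mat_def L_def by simp
  finally show ?thesis .
qed

lemma proots_lin: "proots (\<Prod>a\<leftarrow>L. [:-a, 1:]) = mset (L :: complex list)"
proof (induction L)
  case Nil thus ?case by simp
next
  case (Cons a L)
  have nz: "(\<Prod>a\<leftarrow>L. [:-a, 1:]) \<noteq> 0" by (subst prod_list_zero_iff) auto
  have "proots ([:-a, 1:] * (\<Prod>a\<leftarrow>L. [:-a, 1:])) = proots [:-a, 1:] + proots (\<Prod>a\<leftarrow>L. [:-a, 1:])"
    by (rule proots_mult) (use nz in auto)
  moreover have "proots [:-a, 1:] = {#a#}" using proots_linear_factor[of "-a"] by simp
  ultimately show ?case using Cons by simp
qed

lemma eigvals_spec:
  assumes H: "H \<in> carrier_mat D D" and u: "orthonormal D D u"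
    and ev: "\<forall>j<D. H *\<^sub>v u j = complex_of_real (lam j) \<cdot>\<^sub>v u j"
  shows "eigvals_sorted H = sort (map lam [0..<D])"
proof -
  have roots: "image_mset Re (proots (char_poly H)) = mset (map lam [0..<D])"
    unfolding charpoly_spec[OF H u ev] proots_lin by (simp add: multiset.map_comp o_def)
  show ?thesis unfolding eigvals_sorted_def roots by (rule sorted_list_of_multiset_mset)
qed

lemma select_smallest:
  fixes L :: "real list" assumes n: "n \<le> length L"
  shows "\<exists>S. S \<subseteq> {..<length L} \<and> card S = n \<and> (\<forall>j\<in>S. \<forall>j'\<in>{..<length L}-S. L!j \<le> L!j')
     \<and> sum_list (take n (sort L)) = (\<Sum>j\<in>S. L!j)"
proof -
  have "mset L = mset (sort L)" by simp
  then obtain f where f: "bij_betw f {..<length L} {..<length (sort L)}"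
    and fL: "\<forall>i<length L. L ! i = sort L ! (f i)"
    using permutation_Ex_bij by blast
  define S where "S = {i. i < length L \<and> f i < n}"
  have fS: "f ` S = {..<n}"
  proof
    show "f ` S \<subseteq> {..<n}" unfolding S_def by auto
  next
    show "{..<n} \<subseteq> f ` S"
    proof
      fix k assume "k \<in> {..<n}"
      hence k: "k < n" by simp
      hence "k \<in> f ` {..<length L}" using f n unfolding bij_betw_def by auto
      then obtain i where "i < length L" "k = f i" by auto
      thus "k \<in> f ` S" unfolding S_def using k by auto
    qed
  qed
  have inj: "inj_on f S" using f unfolding bij_betw_def S_def by (auto intro: inj_on_subset)
  have cS: "card S = n" using card_image[OF inj] fS by simp
  have ord: "\<forall>j\<in>S. \<forall>j'\<in>{..<length L}-S. L!j \<le> L!j'"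
  proof (intro ballI)
    fix j j' assume j: "j \<in> S" and j': "j' \<in> {..<length L} - S"
    have "f j' < length L" using f j' unfolding bij_betw_def by auto
    moreover have "f j \<le> f j'" using j j' unfolding S_def by auto
    ultimately have "sort L ! (f j) \<le> sort L ! (f j')" by (intro sorted_nth_mono) auto
    thus "L!j \<le> L!j'" using fL j j' unfolding S_def by auto
  qed
  have "sum_list (take n (sort L)) = (\<Sum>k<n. sort L ! k)"
    using n by (simp add: sum_list_sum_nth atLeast0LessThan)
  also have "\<dots> = (\<Sum>j\<in>S. sort L ! (f j))"
    using sum.reindex[OF inj, of "\<lambda>k. sort L ! k"] fS by simp
  also have "\<dots> = (\<Sum>j\<in>S. L ! j)" using fL unfolding S_def by (intro sum.cong refl) auto
  finally have sm: "sum_list (take n (sort L)) = (\<Sum>j\<in>S. L ! j)" .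
  have "S \<subseteq> {..<length L}" unfolding S_def by auto
  thus ?thesis using cS ord sm by blast
qed

lemma chi_spec:
  assumes h: "herm D H" and n: "n \<le> D"
  shows "\<exists>u lam S. orthonormal D D u \<and> (\<forall>j<D. H *\<^sub>v u j = complex_of_real (lam j) \<cdot>\<^sub>v u j)
     \<and> S \<subseteq> {..<D} \<and> card S = n \<and> (\<forall>j\<in>S. \<forall>j'\<in>{..<D}-S. lam j \<le> lam j')
     \<and> chi n H = (\<Sum>j\<in>S. lam j)"
proof -
  obtain u lam where u: "orthonormal D D u" and ev: "\<forall>j<D. H *\<^sub>v u j = complex_of_real (lam j) \<cdot>\<^sub>v u j"
    using spectral[OF h] by blast
  obtain S where S: "S \<subseteq> {..<D}" "card S = n"
    and ord: "\<forall>j\<in>S. \<forall>j'\<in>{..<D}-S. map lam [0..<D] ! j \<le> map lam [0..<D] ! j'"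
    and sm: "sum_list (take n (sort (map lam [0..<D]))) = (\<Sum>j\<in>S. map lam [0..<D] ! j)"
    using select_smallest[of n "map lam [0..<D]"] n by auto
  have "chi n H = (\<Sum>j\<in>S. lam j)"
    unfolding chi_def eigvals_spec[OF herm_carrier[OF h] u ev] sm using S(1)
    by (intro sum.cong refl) auto
  moreover have "\<forall>j\<in>S. \<forall>j'\<in>{..<D}-S. lam j \<le> lam j'"
    using ord S(1) by (auto simp: subset_iff)
  ultimately show ?thesis using u ev S by blast
qed

section \<open>Ky Fan's minimum principle\<close>

text \<open>A weighted sum of values with weights in \<open>[0,1]\<close> summing to \<open>n\<close> is at least the sum of
  the \<open>n\<close> smallest values: compare both with the threshold \<open>t\<close>, the largest of these values.\<close>

lemma threshold:
  fixes lam C :: "nat \<Rightarrow> real"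
  assumes I: "finite I" and S: "S \<subseteq> I" "card S = n" "1 \<le> n"
    and ord: "\<forall>j\<in>S. \<forall>j'\<in>I-S. lam j \<le> lam j'"
    and C: "\<And>j. j \<in> I \<Longrightarrow> 0 \<le> C j" "\<And>j. j \<in> I \<Longrightarrow> C j \<le> 1"
    and sC: "(\<Sum>j\<in>I. C j) = n"
  shows "(\<Sum>j\<in>S. lam j) \<le> (\<Sum>j\<in>I. lam j * C j)"
proof -
  have fS: "finite S" using I S(1) finite_subset by blast
  have neS: "S \<noteq> {}" using S(2,3) by auto
  define t where "t = Max (lam ` S)"
  have tS: "\<And>j. j \<in> S \<Longrightarrow> lam j \<le> t" unfolding t_def using fS by auto
  have "t \<in> lam ` S" unfolding t_def using fS neS by (intro Max_in) auto
  then obtain j0 where j0: "j0 \<in> S" "t = lam j0" by auto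
  have tI: "\<And>j. j \<in> I - S \<Longrightarrow> t \<le> lam j" using ord j0 by auto
  have split: "(\<Sum>j\<in>I. lam j * C j) = (\<Sum>j\<in>S. lam j * C j) + (\<Sum>j\<in>I-S. lam j * C j)"
    by (metis add.commute sum.subset_diff[OF S(1) I])
  have splitC: "(\<Sum>j\<in>I. C j) = (\<Sum>j\<in>S. C j) + (\<Sum>j\<in>I-S. C j)"
    by (metis add.commute sum.subset_diff[OF S(1) I])
  have a: "(\<Sum>j\<in>S. t * (C j - 1)) \<le> (\<Sum>j\<in>S. lam j * (C j - 1))"
  proof (rule sum_mono)
    fix j assume j: "j \<in> S"
    have "C j - 1 \<le> 0" using C(2) j S(1) by auto
    with tS[OF j] show "t * (C j - 1) \<le> lam j * (C j - 1)" by (rule mult_right_mono_neg)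
  qed
  have b: "(\<Sum>j\<in>I-S. t * C j) \<le> (\<Sum>j\<in>I-S. lam j * C j)"
  proof (rule sum_mono)
    fix j assume j: "j \<in> I - S"
    thus "t * C j \<le> lam j * C j" using tI[OF j] C(1) by (auto intro: mult_right_mono)
  qed
  have "(\<Sum>j\<in>S. t * (C j - 1)) + (\<Sum>j\<in>I-S. t * C j) = t * ((\<Sum>j\<in>I. C j) - card S)"
    unfolding splitC by (simp add: sum_distrib_left[symmetric] sum_subtractf algebra_simps)
  also have "\<dots> = 0" using sC S(2) by simp
  finally have z: "(\<Sum>j\<in>S. t * (C j - 1)) + (\<Sum>j\<in>I-S. t * C j) = 0" .
  have "(\<Sum>j\<in>S. lam j * (C j - 1)) = (\<Sum>j\<in>S. lam j * C j) - (\<Sum>j\<in>S. lam j)"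
    by (simp add: algebra_simps sum_subtractf)
  thus ?thesis using a b z split by linarith
qed

lemma rayleigh_expansion:
  assumes h: "herm D T" and u: "orthonormal D D u"
    and ev: "\<forall>j<D. T *\<^sub>v u j = complex_of_real (lam j) \<cdot>\<^sub>v u j" and x: "x \<in> carrier_vec D"
  shows "Re (ip x (T *\<^sub>v x)) = (\<Sum>t<D. lam t * (cmod (ip (u t) x))^2)"
proof -
  have Txc: "T *\<^sub>v x \<in> carrier_vec D" using herm_carrier[OF h] x by simp
  have "ip x (T *\<^sub>v x) = (\<Sum>t<D. cnj (ip (u t) x) * ip (u t) (T *\<^sub>v x))"
    by (rule ip_expand[OF u x Txc])
  also have "\<dots> = (\<Sum>t<D. complex_of_real (lam t * (cmod (ip (u t) x))^2))"
  proof (intro sum.cong refl)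
    fix t assume "t \<in> {..<D}"
    hence uc: "u t \<in> carrier_vec D" and t: "t < D" using orthonormal_carrier[OF u] by auto
    have "ip (u t) (T *\<^sub>v x) = ip (T *\<^sub>v u t) x" using ip_herm[OF h uc x] by simp
    also have "\<dots> = complex_of_real (lam t) * ip (u t) x" using ev t uc x by (simp add: ip_smult_left)
    finally show "cnj (ip (u t) x) * ip (u t) (T *\<^sub>v x) = complex_of_real (lam t * (cmod (ip (u t) x))^2)"
      unfolding of_real_mult complex_norm_square by (simp add: ac_simps)
  qed
  finally show ?thesis by (simp only: Re_complex_of_real of_real_sum[symmetric])
qed

text \<open>The weight of eigenvector \<open>u t\<close> is \<open>\<Sum>\<^sub>l |\<langle>u t, w l\<rangle>|\<^sup>2\<close>: at most 1 by
  Bessel, and the weights sum to \<open>n\<close> by Parseval.\<close>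

lemma kyfan:
  assumes h: "herm D T" and n: "1 \<le> n" "n \<le> D" and w: "orthonormal D n w"
  shows "chi n T \<le> (\<Sum>l<n. Re (ip (w l) (T *\<^sub>v w l)))"
proof -
  obtain u lam S where u: "orthonormal D D u"
    and ev: "\<forall>j<D. T *\<^sub>v u j = complex_of_real (lam j) \<cdot>\<^sub>v u j"
    and S: "S \<subseteq> {..<D}" "card S = n" "\<forall>j\<in>S. \<forall>j'\<in>{..<D}-S. lam j \<le> lam j'"
    and chi: "chi n T = (\<Sum>j\<in>S. lam j)"
    using chi_spec[OF h n(2)] by blast
  have uc: "\<And>t. t < D \<Longrightarrow> u t \<in> carrier_vec D" using orthonormal_carrier[OF u] .
  have wc: "\<And>l. l < n \<Longrightarrow> w l \<in> carrier_vec D" using orthonormal_carrier[OF w] .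
  define C where "C = (\<lambda>t. \<Sum>l<n. (cmod (ip (u t) (w l)))^2)"
  have C1: "C t \<le> 1" if t: "t < D" for t
  proof -
    have "C t = (\<Sum>l<n. (cmod (ip (w l) (u t)))^2)"
      unfolding C_def using uc[OF t] wc ip_cnj
      by (intro sum.cong refl) (metis complex_mod_cnj lessThan_iff carrier_vecD)
    also have "\<dots> \<le> nsq (u t)" by (rule bessel[OF w n(2) uc[OF t]])
    also have "nsq (u t) = 1" using orthonormal_ip[OF u t t] ip_self[of "u t"] by simp
    finally show ?thesis .
  qed
  have C0: "C t \<ge> 0" for t unfolding C_def by (auto intro: sum_nonneg)
  have sC: "(\<Sum>t<D. C t) = n"
  proof -
    have "(\<Sum>t<D. C t) = (\<Sum>l<n. nsq (w l))"
      unfolding C_def using parseval[OF u wc] by (subst sum.swap) simp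
    also have "\<dots> = (\<Sum>l<n. 1)"
      using orthonormal_ip[OF w] ip_self by (intro sum.cong refl) (metis lessThan_iff of_real_eq_1_iff)
    finally show ?thesis by simp
  qed
  have "chi n T \<le> (\<Sum>t<D. lam t * C t)"
    unfolding chi by (rule threshold[where I="{..<D}"]) (use S n C0 C1 sC in auto)
  also have "\<dots> = (\<Sum>l<n. \<Sum>t<D. lam t * (cmod (ip (u t) (w l)))^2)"
    unfolding C_def by (simp add: sum_distrib_left sum.swap[of _ "{..<n}"])
  also have "\<dots> = (\<Sum>l<n. Re (ip (w l) (T *\<^sub>v w l)))"
    using rayleigh_expansion[OF h u ev wc] by simp
  finally show ?thesis .
qed

section \<open>Bipartite vectors, partial trace and Kronecker products\<close>

text \<open>A vector \<open>x\<close> of \<open>\<complex>^D \<otimes> \<complex>^D\<close> is written \<open>x = \<Sum>\<^sub>i |i\<rangle> \<otimes> x\<^sub>i\<close>; \<open>slice D x i\<close> is the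
  block \<open>x\<^sub>i \<in> \<complex>^D\<close>.\<close>

definition slice :: "nat \<Rightarrow> complex vec \<Rightarrow> nat \<Rightarrow> complex vec" where
  "slice D x i = vec D (\<lambda>j. x $ (i*D + j))"

lemma slice_carrier [simp]: "slice D x i \<in> carrier_vec D"
  unfolding slice_def by simp

lemma idx_lt: fixes i j D :: nat assumes "i < D" "j < D" shows "i*D + j < D*D"
proof -
  have "i*D + j < i*D + D" using assms(2) by (rule add_strict_left_mono)
  also have "\<dots> = (i+1)*D" by simp
  also have "\<dots> \<le> D*D" using assms by (intro mult_le_mono1) simp
  finally show ?thesis .
qed

lemma idx_div: "j < D \<Longrightarrow> (i*D + j) div D = i" for i j D :: nat
proof -
  assume j: "j < D" hence "D \<noteq> 0" by auto
  thus ?thesis using j by (simp add: add.commute[of "i*D" j])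
qed
lemma idx_mod: "j < D \<Longrightarrow> (i*D + j) mod D = j" for i j D :: nat
proof -
  assume j: "j < D" hence "D \<noteq> 0" by auto
  thus ?thesis using j by (simp add: add.commute[of "i*D" j])
qed

lemma sum_pairs: "(\<Sum>p<m*D. f p) = (\<Sum>i<m. \<Sum>j<D. f (i*D + j))" for m D :: nat
proof (induction m)
  case 0 thus ?case by simp
next
  case (Suc m)
  have "(\<Sum>p<Suc m * D. f p) = (\<Sum>p<m*D + D. f p)" by (simp add: add.commute)
  also have "\<dots> = (\<Sum>p<m*D. f p) + (\<Sum>a<D. f (m*D + a))" by (rule sum_split_nat)
  also have "\<dots> = (\<Sum>i<Suc m. \<Sum>j<D. f (i*D + j))" using Suc.IH by simp
  finally show ?case .
qed

lemma nsq_slices: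
  assumes x: "x \<in> carrier_vec (D*D)"
  shows "nsq x = (\<Sum>i<D. nsq (slice D x i))"
  unfolding nsq_def slice_def using x sum_pairs[of "\<lambda>p. (cmod (x $ p))^2" D D] by simp

lemma ptrace_outer_entry:
  assumes x: "x \<in> carrier_vec (D*D)" and j: "j < D" "j' < D"
  shows "ptrace_A D D (outer x) $$ (j,j') = (\<Sum>i<D. x $ (i*D+j) * cnj (x $ (i*D+j')))"
  unfolding ptrace_A_def outer_def using x j by (auto simp: idx_lt intro!: sum.cong)

lemma ptrace_outer_carrier: "ptrace_A D D M \<in> carrier_mat D D"
  unfolding ptrace_A_def by simp

lemma herm_ptrace: assumes x: "x \<in> carrier_vec (D*D)" shows "herm D (ptrace_A D D (outer x))"
  unfolding herm_def using ptrace_outer_carrier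
  by (simp add: ptrace_outer_entry[OF x] mult.commute)

lemma qf_ptrace:
  assumes x: "x \<in> carrier_vec (D*D)" and w: "w \<in> carrier_vec D"
  shows "ip w (ptrace_A D D (outer x) *\<^sub>v w) = complex_of_real (\<Sum>i<D. (cmod (ip w (slice D x i)))^2)"
proof -
  let ?r = "ptrace_A D D (outer x)"
  have rw: "(?r *\<^sub>v w) $ j = (\<Sum>j'<D. (\<Sum>i<D. x $ (i*D+j) * cnj (x $ (i*D+j'))) * w$j')" if j: "j < D" for j
    using mult_mat_vec_index[OF ptrace_outer_carrier w j] ptrace_outer_entry[OF x j] by simp
  have "ip w (?r *\<^sub>v w) = (\<Sum>j<D. cnj (w$j) * (\<Sum>j'<D. (\<Sum>i<D. x $ (i*D+j) * cnj (x $ (i*D+j'))) * w$j'))"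
  proof -
    have dr: "dim_vec (?r *\<^sub>v w) = D" by (simp add: ptrace_A_def)
    show ?thesis unfolding ip_def dr by (intro sum.cong refl) (simp add: rw del: index_mult_mat_vec)
  qed
  also have "\<dots> = (\<Sum>j<D. \<Sum>j'<D. \<Sum>i<D. cnj (w$j) * x $ (i*D+j) * (cnj (x $ (i*D+j')) * w$j'))"
    by (simp add: sum_distrib_left sum_distrib_right ac_simps)
  also have "\<dots> = (\<Sum>j<D. \<Sum>i<D. \<Sum>j'<D. cnj (w$j) * x $ (i*D+j) * (cnj (x $ (i*D+j')) * w$j'))"
    by (intro sum.cong refl sum.swap)
  also have "\<dots> = (\<Sum>i<D. \<Sum>j<D. \<Sum>j'<D. cnj (w$j) * x $ (i*D+j) * (cnj (x $ (i*D+j')) * w$j'))"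
    by (rule sum.swap)
  also have "\<dots> = (\<Sum>i<D. (\<Sum>j<D. cnj (w$j) * x $ (i*D+j)) * (\<Sum>j'<D. cnj (x $ (i*D+j')) * w$j'))"
    by (simp add: sum_product)
  also have "\<dots> = (\<Sum>i<D. ip w (slice D x i) * cnj (ip w (slice D x i)))"
    unfolding ip_def slice_def by (simp add: mult.commute)
  also have "\<dots> = complex_of_real (\<Sum>i<D. (cmod (ip w (slice D x i)))^2)"
    by (simp only: of_real_sum complex_norm_square)
  finally show ?thesis .
qed

lemma kron_entry:
  assumes A: "A \<in> carrier_mat D D" and B: "B \<in> carrier_mat D D"
    and idx: "a < D" "b < D" "i < D" "j < D"
  shows "kron A B $$ (a*D+b, i*D+j) = A $$ (a,i) * B $$ (b,j)"
  unfolding kron_def using A B idx by (simp add: idx_lt idx_div idx_mod)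

lemma kron_carrier: "A \<in> carrier_mat D D \<Longrightarrow> B \<in> carrier_mat D D \<Longrightarrow> kron A B \<in> carrier_mat (D*D) (D*D)"
  unfolding kron_def by simp

lemma kron_vec_slice:
  assumes A: "A \<in> carrier_mat D D" and B: "B \<in> carrier_mat D D" and x: "x \<in> carrier_vec (D*D)"
    and a: "a < D"
  shows "slice D (kron A B *\<^sub>v x) a = vec D (\<lambda>b. \<Sum>i<D. A $$ (a,i) * (B *\<^sub>v slice D x i) $ b)"
proof (rule eq_vecI)
  fix b assume "b < dim_vec (vec D (\<lambda>b. \<Sum>i<D. A $$ (a,i) * (B *\<^sub>v slice D x i) $ b))"
  hence b: "b < D" by simp
  have K: "kron A B \<in> carrier_mat (D*D) (D*D)" using kron_carrier[OF A B] .
  have "slice D (kron A B *\<^sub>v x) a $ b = (kron A B *\<^sub>v x) $ (a*D+b)" unfolding slice_def using b by simp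
  also have "\<dots> = (\<Sum>p<D*D. kron A B $$ (a*D+b, p) * x $ p)"
    using K x idx_lt[OF a b] by (simp add: mult_mat_vec_index del: index_mult_mat_vec)
  also have "\<dots> = (\<Sum>i<D. \<Sum>j<D. kron A B $$ (a*D+b, i*D+j) * x $ (i*D+j))" by (rule sum_pairs)
  also have "\<dots> = (\<Sum>i<D. \<Sum>j<D. A $$ (a,i) * (B $$ (b,j) * x $ (i*D+j)))"
    using kron_entry[OF A B] a b by (intro sum.cong refl) simp
  also have "\<dots> = (\<Sum>i<D. A $$ (a,i) * (B *\<^sub>v slice D x i) $ b)"
    using B b by (intro sum.cong refl) (simp add: mult_mat_vec_index slice_def sum_distrib_left del: index_mult_mat_vec)
  finally show "slice D (kron A B *\<^sub>v x) a $ b = vec D (\<lambda>b. \<Sum>i<D. A $$ (a,i) * (B *\<^sub>v slice D x i) $ b) $ b"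
    using b by simp
qed (simp add: slice_def)

lemma outer_conj:
  assumes M: "M \<in> carrier_mat m m" and x: "x \<in> carrier_vec m"
  shows "M * outer x * adj M = outer (M *\<^sub>v x)"
proof -
  have O: "outer x \<in> carrier_mat m m" using x unfolding outer_def by simp
  have adjM: "adj M \<in> carrier_mat m m" using M unfolding adj_def by simp
  have Mx: "M * outer x = mat m m (\<lambda>(p,s). (M *\<^sub>v x) $ p * cnj (x $ s))"
  proof (rule eq_matI)
    fix p s assume ps: "p < dim_row (mat m m (\<lambda>(p,s). (M *\<^sub>v x) $ p * cnj (x $ s)))"
      "s < dim_col (mat m m (\<lambda>(p,s). (M *\<^sub>v x) $ p * cnj (x $ s)))"
    hence p: "p < m" and s: "s < m" by auto
    have "(M * outer x) $$ (p,s) = (\<Sum>r<m. M $$ (p,r) * (x $ r * cnj (x $ s)))"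
      using M x p s by (simp add: outer_def scalar_prod_def atLeast0LessThan)
    also have "\<dots> = (M *\<^sub>v x) $ p * cnj (x $ s)"
      using M x p by (simp add: mult_mat_vec_index sum_distrib_left sum_distrib_right ac_simps del: index_mult_mat_vec)
    finally show "(M * outer x) $$ (p,s) = mat m m (\<lambda>(p,s). (M *\<^sub>v x) $ p * cnj (x $ s)) $$ (p,s)"
      using p s by simp
  qed (use M O in auto)
  show ?thesis
  proof (rule eq_matI)
    fix p q assume pq: "p < dim_row (outer (M *\<^sub>v x))" "q < dim_col (outer (M *\<^sub>v x))"
    hence p: "p < m" and q: "q < m" using M by (auto simp: outer_def)
    have "(M * outer x * adj M) $$ (p,q) = (\<Sum>s<m. (M *\<^sub>v x) $ p * cnj (x $ s) * cnj (M $$ (q,s)))"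
      unfolding Mx using M adjM p q by (simp add: adj_def scalar_prod_def atLeast0LessThan)
    also have "\<dots> = (M *\<^sub>v x) $ p * cnj ((M *\<^sub>v x) $ q)"
      using M x q by (simp add: mult_mat_vec_index sum_distrib_left ac_simps del: index_mult_mat_vec)
    also have "\<dots> = outer (M *\<^sub>v x) $$ (p,q)" using M p q by (simp add: outer_def)
    finally show "(M * outer x * adj M) $$ (p,q) = outer (M *\<^sub>v x) $$ (p,q)" .
  qed (use M adjM O in \<open>auto simp: outer_def\<close>)
qed

lemma adj_carrier: "A \<in> carrier_mat m n \<Longrightarrow> adj A \<in> carrier_mat n m"
  unfolding adj_def by simp

lemma ip_adj:
  assumes M: "M \<in> carrier_mat m n" and x: "x \<in> carrier_vec n" and y: "y \<in> carrier_vec m"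
  shows "ip x (adj M *\<^sub>v y) = ip (M *\<^sub>v x) y"
proof -
  have adjM: "adj M \<in> carrier_mat n m" using adj_carrier[OF M] .
  have rw: "(adj M *\<^sub>v y) $ i = (\<Sum>j<m. cnj (M $$ (j,i)) * y $ j)" if i: "i < n" for i
    using adjM M y i by (simp add: adj_def scalar_prod_def atLeast0LessThan)
  have "ip x (adj M *\<^sub>v y) = (\<Sum>i<n. cnj (x $ i) * (\<Sum>j<m. cnj (M $$ (j,i)) * y $ j))"
    unfolding ip_def using adjM rw by simp
  also have "\<dots> = (\<Sum>i<n. \<Sum>j<m. cnj (M $$ (j,i)) * cnj (x $ i) * y $ j)"
    by (simp add: sum_distrib_left ac_simps)
  also have "\<dots> = (\<Sum>j<m. \<Sum>i<n. cnj (M $$ (j,i)) * cnj (x $ i) * y $ j)" by (rule sum.swap)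
  also have "\<dots> = (\<Sum>j<m. cnj ((M *\<^sub>v x) $ j) * y $ j)"
  proof (intro sum.cong refl)
    fix j assume "j \<in> {..<m}"
    hence "(M *\<^sub>v x) $ j = (\<Sum>i<n. M$$(j,i) * x$i)" using M x by (simp add: scalar_prod_def atLeast0LessThan)
    thus "(\<Sum>i<n. cnj (M $$ (j,i)) * cnj (x $ i) * y $ j) = cnj ((M *\<^sub>v x) $ j) * y $ j"
      by (simp add: sum_distrib_right)
  qed
  also have "\<dots> = ip (M *\<^sub>v x) y" unfolding ip_def using y by simp
  finally show ?thesis .
qed

lemma kron_adj:
  assumes A: "A \<in> carrier_mat D D" and B: "B \<in> carrier_mat D D"
  shows "kron (adj A * A) (adj B * B) = adj (kron A B) * kron A B"
proof -
  have K: "kron A B \<in> carrier_mat (D*D) (D*D)" using kron_carrier[OF A B] .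
  have AA: "adj A * A \<in> carrier_mat D D" and BB: "adj B * B \<in> carrier_mat D D"
    using A B unfolding adj_def by auto
  have KK: "kron (adj A * A) (adj B * B) \<in> carrier_mat (D*D) (D*D)" using kron_carrier[OF AA BB] .
  have adjK: "adj (kron A B) \<in> carrier_mat (D*D) (D*D)" using K unfolding adj_def by simp
  show ?thesis
  proof (rule eq_matI)
    fix P Q assume PQ: "P < dim_row (adj (kron A B) * kron A B)" "Q < dim_col (adj (kron A B) * kron A B)"
    hence P: "P < D*D" and Q: "Q < D*D" using adjK K by auto
    hence D0: "0 < D" by (cases D) auto
    define a b i j where "a = P div D" "b = P mod D" "i = Q div D" "j = Q mod D"
    have ab: "a < D" "b < D" "i < D" "j < D" "P = a*D+b" "Q = i*D+j"
      using P Q D0 unfolding a_b_i_j_def by (auto simp: less_mult_imp_div_less)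
    have "kron (adj A * A) (adj B * B) $$ (P,Q) = (adj A * A) $$ (a,i) * (adj B * B) $$ (b,j)"
      unfolding ab(5,6) by (rule kron_entry[OF AA BB ab(1-4)])
    also have "\<dots> = (\<Sum>c<D. cnj (A $$ (c,a)) * A $$ (c,i)) * (\<Sum>d<D. cnj (B $$ (d,b)) * B $$ (d,j))"
      using A B ab by (simp add: adj_def scalar_prod_def atLeast0LessThan)
    also have "\<dots> = (\<Sum>c<D. \<Sum>d<D. cnj (A $$ (c,a) * B $$ (d,b)) * (A $$ (c,i) * B $$ (d,j)))"
      unfolding sum_product by (intro sum.cong refl) (simp add: ac_simps)
    also have "\<dots> = (\<Sum>c<D. \<Sum>d<D. cnj (kron A B $$ (c*D+d, a*D+b)) * kron A B $$ (c*D+d, i*D+j))"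
      by (intro sum.cong refl) (simp add: kron_entry[OF A B] ab(1-4))
    also have "\<dots> = (\<Sum>r<D*D. cnj (kron A B $$ (r, P)) * kron A B $$ (r, Q))"
      unfolding ab(5,6) by (rule sum_pairs[symmetric])
    also have "\<dots> = (adj (kron A B) * kron A B) $$ (P,Q)"
      using K adjK P Q by (simp add: adj_def scalar_prod_def atLeast0LessThan)
    finally show "kron (adj A * A) (adj B * B) $$ (P,Q) = (adj (kron A B) * kron A B) $$ (P,Q)" .
  qed (use KK adjK K in auto)
qed



lemma ip_msum:
  assumes K: "finite K" and f: "\<And>k. k \<in> K \<Longrightarrow> f k \<in> carrier_mat d d" and x: "x \<in> carrier_vec d"
  shows "ip x (msum d f K *\<^sub>v x) = (\<Sum>k\<in>K. ip x (f k *\<^sub>v x))"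
proof -
  have rw: "(msum d f K *\<^sub>v x) $ p = (\<Sum>k\<in>K. (f k *\<^sub>v x) $ p)" if p: "p < d" for p
  proof -
    have "(msum d f K *\<^sub>v x) $ p = (\<Sum>q<d. (\<Sum>k\<in>K. f k $$ (p,q)) * x $ q)"
      using p x by (simp add: msum_def scalar_prod_def atLeast0LessThan)
    also have "\<dots> = (\<Sum>q<d. \<Sum>k\<in>K. f k $$ (p,q) * x $ q)" by (simp add: sum_distrib_right)
    also have "\<dots> = (\<Sum>k\<in>K. \<Sum>q<d. f k $$ (p,q) * x $ q)" by (rule sum.swap)
    also have "\<dots> = (\<Sum>k\<in>K. (f k *\<^sub>v x) $ p)"
    proof (intro sum.cong refl)
      fix k assume "k \<in> K"
      thus "(\<Sum>q<d. f k $$ (p,q) * x $ q) = (f k *\<^sub>v x) $ p"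
        using mult_mat_vec_index[OF f[OF \<open>k \<in> K\<close>] x p] by simp
    qed
    finally show ?thesis .
  qed
  have dm: "dim_vec (msum d f K *\<^sub>v x) = d" by (simp add: msum_def)
  have "ip x (msum d f K *\<^sub>v x) = (\<Sum>p<d. cnj (x $ p) * (\<Sum>k\<in>K. (f k *\<^sub>v x) $ p))"
    unfolding ip_def dm by (intro sum.cong refl) (simp add: rw del: index_mult_mat_vec)
  also have "\<dots> = (\<Sum>p<d. \<Sum>k\<in>K. cnj (x $ p) * (f k *\<^sub>v x) $ p)" by (simp add: sum_distrib_left)
  also have "\<dots> = (\<Sum>k\<in>K. \<Sum>p<d. cnj (x $ p) * (f k *\<^sub>v x) $ p)" by (rule sum.swap)
  also have "\<dots> = (\<Sum>k\<in>K. ip x (f k *\<^sub>v x))"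
    unfolding ip_def using f by (intro sum.cong refl) auto
  finally show ?thesis .
qed

lemma vnorm_nsq: "vnorm w = sqrt (nsq w)"
  unfolding vnorm_def nsq_def by simp

text \<open>The set in the definition of the operator norm is bounded, by the sum of the moduli of
  the entries of each row.\<close>

lemma opnorm_bdd:
  assumes R: "R \<in> carrier_mat m m"
  shows "bdd_above {vnorm (R *\<^sub>v w) | w. w \<in> carrier_vec (dim_col R) \<and> vnorm w = 1}"
proof (rule bdd_aboveI)
  fix s assume "s \<in> {vnorm (R *\<^sub>v w) | w. w \<in> carrier_vec (dim_col R) \<and> vnorm w = 1}"
  then obtain w where w: "w \<in> carrier_vec m" "vnorm w = 1" "s = vnorm (R *\<^sub>v w)"
    using R by auto
  have nw: "nsq w = 1" using w(2) unfolding vnorm_nsq using nsq_nonneg[of w] by simp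
  have wq: "cmod (w $ q) \<le> 1" if q: "q < m" for q
  proof -
    have "(cmod (w $ q))^2 \<le> nsq w" unfolding nsq_def
      by (rule member_le_sum[where f = "\<lambda>i. (cmod (w $ i))^2"]) (use q w in auto)
    thus ?thesis using nw by (simp add: power_le_one_iff abs_le_iff)
  qed
  have comp: "cmod ((R *\<^sub>v w) $ p) \<le> (\<Sum>q<m. cmod (R $$ (p,q)))" if p: "p < m" for p
  proof -
    have "cmod ((R *\<^sub>v w) $ p) \<le> (\<Sum>q<m. cmod (R $$ (p,q) * w $ q))"
      using R w p norm_sum by (simp add: mult_mat_vec_index del: index_mult_mat_vec)
    also have "\<dots> \<le> (\<Sum>q<m. cmod (R $$ (p,q)))"
      by (rule sum_mono) (use wq in \<open>auto simp: norm_mult intro: mult_left_le\<close>)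
    finally show ?thesis .
  qed
  have "nsq (R *\<^sub>v w) \<le> (\<Sum>p<m. (\<Sum>q<m. cmod (R $$ (p,q)))^2)"
    unfolding nsq_def using R comp by (auto intro!: sum_mono power_mono)
  thus "s \<le> sqrt (\<Sum>p<m. (\<Sum>q<m. cmod (R $$ (p,q)))^2)"
    unfolding w(3) vnorm_nsq by (rule real_sqrt_le_mono)
qed

lemma opnorm_bound:
  assumes R: "R \<in> carrier_mat m m" and x: "x \<in> carrier_vec m"
  shows "vnorm (R *\<^sub>v x) \<le> opnorm R * vnorm x"
proof (cases "nsq x = 0")
  case True
  hence "R *\<^sub>v x = 0\<^sub>v m" using R nsq_zero_iff[OF x] by auto
  thus ?thesis using True unfolding vnorm_nsq by (simp add: nsq_def)
next
  case False
  hence nx: "vnorm x > 0" unfolding vnorm_nsq using nsq_nonneg[of x] by simp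
  define c where "c = 1 / vnorm x"
  have c: "c > 0" unfolding c_def using nx by simp
  define w where "w = complex_of_real c \<cdot>\<^sub>v x"
  have vw: "vnorm w = 1" unfolding w_def vnorm_nsq nsq_smult c_def using nx
    by (simp add: real_sqrt_mult vnorm_nsq[symmetric] norm_divide)
  have Rw: "vnorm (R *\<^sub>v w) = c * vnorm (R *\<^sub>v x)"
    unfolding w_def using R x c by (simp add: mult_mat_vec vnorm_nsq nsq_smult real_sqrt_mult)
  have "c * vnorm (R *\<^sub>v x) \<le> opnorm R"
    unfolding opnorm_def Rw[symmetric] using vw x R
    by (intro cSup_upper[OF _ opnorm_bdd[OF R]]) (auto simp: w_def)
  thus ?thesis using nx unfolding c_def by (simp add: divide_le_eq mult.commute)
qed

section \<open>Projecting the state onto the low spectral subspace\<close>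

text \<open>\<open>low_part D u S x = (1 \<otimes> P) x\<close>, where \<open>P\<close> is the orthogonal projection onto the span of the
  orthonormal vectors \<open>u j\<close>, \<open>j \<in> S\<close>: every slice of \<open>x\<close> is projected.\<close>

definition low_part :: "nat \<Rightarrow> (nat \<Rightarrow> complex vec) \<Rightarrow> nat set \<Rightarrow> complex vec \<Rightarrow> complex vec" where
  "low_part D u S x = vec (D*D) (\<lambda>p. \<Sum>j\<in>S. ip (u j) (slice D x (p div D)) * u j $ (p mod D))"

lemma low_part_carrier: "low_part D u S x \<in> carrier_vec (D*D)"
  unfolding low_part_def by simp

lemma slice_low_part:
  assumes "i < D"
  shows "slice D (low_part D u S x) i = vec D (\<lambda>b. \<Sum>j\<in>S. ip (u j) (slice D x i) * u j $ b)"
  unfolding slice_def low_part_def using assms by (intro eq_vecI) (auto simp: idx_lt idx_div idx_mod)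

lemma nsq_low_part:
  assumes x: "x \<in> carrier_vec (D*D)" and u: "orthonormal D D u" and S: "S \<subseteq> {..<D}"
    and ev: "\<forall>j<D. ptrace_A D D (outer x) *\<^sub>v u j = complex_of_real (lam j) \<cdot>\<^sub>v u j"
  shows "nsq (low_part D u S x) = (\<Sum>j\<in>S. lam j)"
proof -
  have weight: "(\<Sum>i<D. (cmod (ip (u j) (slice D x i)))^2) = lam j" if j: "j \<in> S" for j
  proof -
    have jD: "j < D" using j S by auto
    have "complex_of_real (\<Sum>i<D. (cmod (ip (u j) (slice D x i)))^2)
        = ip (u j) (ptrace_A D D (outer x) *\<^sub>v u j)"
      using qf_ptrace[OF x orthonormal_carrier[OF u jD]] by simp
    also have "\<dots> = complex_of_real (lam j)"
      using ev jD orthonormal_ip[OF u jD jD] by (simp add: ip_smult_right)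
    finally show ?thesis by (simp only: of_real_eq_iff)
  qed
  have "nsq (low_part D u S x) = (\<Sum>i<D. \<Sum>j\<in>S. (cmod (ip (u j) (slice D x i)))^2)"
    unfolding nsq_slices[OF low_part_carrier]
    by (intro sum.cong refl) (simp add: slice_low_part nsq_comb[OF u S])
  also have "\<dots> = (\<Sum>j\<in>S. lam j)" using weight by (subst sum.swap) simp
  finally show ?thesis .
qed

lemma kron_slices_agree:
  assumes A: "A \<in> carrier_mat D D" and B: "B \<in> carrier_mat D D"
    and u: "orthonormal D D u" and S: "S \<subseteq> {..<D}" and x: "x \<in> carrier_vec (D*D)"
    and w: "w \<in> carrier_vec D" and wB: "\<And>j. j \<in> {..<D} - S \<Longrightarrow> ip w (B *\<^sub>v u j) = 0"
    and a: "a < D"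
  shows "ip w (slice D (kron A B *\<^sub>v x) a) = ip w (slice D (kron A B *\<^sub>v low_part D u S x) a)"
proof -
  define c where "c = (\<lambda>i j. ip (u j) (slice D x i))"
  have uc: "\<And>j. j \<in> {..<D} \<Longrightarrow> u j \<in> carrier_vec D" using orthonormal_carrier[OF u] by auto
  have fS: "finite S" using S finite_subset by blast
  have Buc: "\<And>j. j \<in> {..<D} \<Longrightarrow> B *\<^sub>v u j \<in> carrier_vec D" using B uc by simp
  have comb: "ip w (B *\<^sub>v vec D (\<lambda>b. \<Sum>j\<in>J. c i j * u j $ b)) = (\<Sum>j\<in>J. c i j * ip w (B *\<^sub>v u j))"
    if J: "J \<subseteq> {..<D}" for J i
  proof -
    have fJ: "finite J" using J finite_subset by blast
    have "B *\<^sub>v vec D (\<lambda>b. \<Sum>j\<in>J. c i j * u j $ b) = vec D (\<lambda>b. \<Sum>j\<in>J. c i j * (B *\<^sub>v u j) $ b)"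
      using mat_vec_lin[OF B _ fJ] uc J by blast
    thus ?thesis using ip_lin_right[of J "\<lambda>j. B *\<^sub>v u j" D w "c i"] B J w fJ
      by (auto simp: subset_iff)
  qed
  have key: "ip w (B *\<^sub>v slice D x i) = ip w (B *\<^sub>v slice D (low_part D u S x) i)" if i: "i < D" for i
  proof -
    have "ip w (B *\<^sub>v slice D x i) = (\<Sum>j<D. c i j * ip w (B *\<^sub>v u j))"
      using basis_expansion[OF u slice_carrier] comb[of "{..<D}"] unfolding c_def by simp
    also have "\<dots> = (\<Sum>j\<in>S. c i j * ip w (B *\<^sub>v u j))"
      using S wB by (intro sum.mono_neutral_right) auto
    also have "\<dots> = ip w (B *\<^sub>v slice D (low_part D u S x) i)"
      using comb[OF S] slice_low_part[OF i] unfolding c_def by simp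
    finally show ?thesis .
  qed
  have BP: "\<And>y i. i \<in> {..<D} \<Longrightarrow> dim_vec (B *\<^sub>v slice D y i) = D" using B by simp
  show ?thesis
    unfolding kron_vec_slice[OF A B x a] kron_vec_slice[OF A B low_part_carrier a]
    using ip_lin_right[OF BP _ finite_lessThan] w key by simp
qed

text \<open>Claim (b): Ky Fan applied to \<open>n\<close> orthonormal vectors orthogonal to the \<open>D - n\<close> vectors
  \<open>B u j\<close>, \<open>j \<notin> S\<close>, followed by Bessel's inequality on each slice.\<close>

lemma chi_conj_le_low_part:
  assumes A: "A \<in> carrier_mat D D" and B: "B \<in> carrier_mat D D"
    and u: "orthonormal D D u" and S: "S \<subseteq> {..<D}" "card S = n"
    and x: "x \<in> carrier_vec (D*D)" and n: "1 \<le> n" "n \<le> D"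
  shows "chi n (ptrace_A D D (kron A B * outer x * adj (kron A B)))
    \<le> nsq (kron A B *\<^sub>v low_part D u S x)"
proof -
  let ?K = "kron A B"
  let ?y = "?K *\<^sub>v x" and ?z = "?K *\<^sub>v low_part D u S x"
  have Kc: "?K \<in> carrier_mat (D*D) (D*D)" by (rule kron_carrier[OF A B])
  have yc: "?y \<in> carrier_vec (D*D)" and zc: "?z \<in> carrier_vec (D*D)"
    using Kc x low_part_carrier by auto
  obtain g where "bij_betw g {0..<card ({..<D} - S)} ({..<D} - S)"
    using ex_bij_betw_nat_finite[of "{..<D} - S"] by blast
  moreover have "card ({..<D} - S) = D - n" using S by (simp add: card_Diff_subset finite_subset)
  ultimately have g: "bij_betw g {..<D - n} ({..<D} - S)" by (simp add: atLeast0LessThan)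
  have "\<forall>j<D-n. B *\<^sub>v u (g j) \<in> carrier_vec D"
    using bij_betwE[OF g] B orthonormal_carrier[OF u] by auto
  then obtain w where w: "orthonormal D n w" and wz: "\<forall>l<n. \<forall>j<D-n. ip (w l) (B *\<^sub>v u (g j)) = 0"
    using orth_ext[of n "D-n" D "\<lambda>j. B *\<^sub>v u (g j)"] n by auto
  have wB: "ip (w l) (B *\<^sub>v u j) = 0" if "l < n" "j \<in> {..<D} - S" for l j
  proof -
    have "j \<in> g ` {..<D - n}" using g that(2) by (simp add: bij_betw_def)
    then obtain j' where "j' < D - n" "j = g j'" by auto
    thus ?thesis using wz that(1) by simp
  qed
  have "chi n (ptrace_A D D (outer ?y)) \<le> (\<Sum>l<n. Re (ip (w l) (ptrace_A D D (outer ?y) *\<^sub>v w l)))"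
    by (rule kyfan[OF herm_ptrace[OF yc] n w])
  also have "\<dots> = (\<Sum>l<n. \<Sum>a<D. (cmod (ip (w l) (slice D ?y a)))^2)"
    using qf_ptrace[OF yc orthonormal_carrier[OF w]] by simp
  also have "\<dots> = (\<Sum>a<D. \<Sum>l<n. (cmod (ip (w l) (slice D ?z a)))^2)"
    using kron_slices_agree[OF A B u S(1) x orthonormal_carrier[OF w] wB]
    by (subst sum.swap) simp
  also have "\<dots> \<le> (\<Sum>a<D. nsq (slice D ?z a))"
    by (rule sum_mono) (rule bessel[OF w n(2) slice_carrier])
  also have "\<dots> = nsq ?z" using nsq_slices[OF zc] by simp
  finally show ?thesis unfolding outer_conj[OF Kc x] .
qed

lemma sum_nsq_kron_le_opnorm:
  assumes K: "finite K" and x: "x \<in> carrier_vec (D*D)"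
    and A: "\<And>k. k \<in> K \<Longrightarrow> A k \<in> carrier_mat D D" and B: "\<And>k. k \<in> K \<Longrightarrow> B k \<in> carrier_mat D D"
  defines "R \<equiv> msum (D*D) (\<lambda>k. kron (adj (A k) * A k) (adj (B k) * B k)) K"
  shows "(\<Sum>k\<in>K. nsq (kron (A k) (B k) *\<^sub>v x)) \<le> opnorm R * nsq x"
proof -
  have Rc: "R \<in> carrier_mat (D*D) (D*D)" unfolding R_def msum_def by simp
  have quad_term: "ip x (kron (adj (A k) * A k) (adj (B k) * B k) *\<^sub>v x)
      = complex_of_real (nsq (kron (A k) (B k) *\<^sub>v x))" if k: "k \<in> K" for k
  proof -
    let ?K = "kron (A k) (B k)"
    have Kc: "?K \<in> carrier_mat (D*D) (D*D)" using kron_carrier A B k by blast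
    have "kron (adj (A k) * A k) (adj (B k) * B k) *\<^sub>v x = adj ?K *\<^sub>v (?K *\<^sub>v x)"
      unfolding kron_adj[OF A[OF k] B[OF k]] using Kc x adj_carrier[OF Kc]
      by (simp add: assoc_mult_mat_vec)
    moreover have "?K *\<^sub>v x \<in> carrier_vec (D*D)" using Kc x by simp
    ultimately show ?thesis using ip_adj[OF Kc x, of "?K *\<^sub>v x"] by (simp add: ip_self)
  qed
  have summand_carrier: "kron (adj (A k) * A k) (adj (B k) * B k) \<in> carrier_mat (D*D) (D*D)"
    if k: "k \<in> K" for k
  proof -
    have "adj (A k) * A k \<in> carrier_mat D D" "adj (B k) * B k \<in> carrier_mat D D"
      using A[OF k] B[OF k] adj_carrier by (auto intro!: mult_carrier_mat)
    thus ?thesis by (rule kron_carrier)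
  qed
  have "ip x (R *\<^sub>v x) = (\<Sum>k\<in>K. ip x (kron (adj (A k) * A k) (adj (B k) * B k) *\<^sub>v x))"
    unfolding R_def by (rule ip_msum[OF K summand_carrier x])
  hence "complex_of_real (\<Sum>k\<in>K. nsq (kron (A k) (B k) *\<^sub>v x)) = ip x (R *\<^sub>v x)"
    using quad_term by simp
  hence "(\<Sum>k\<in>K. nsq (kron (A k) (B k) *\<^sub>v x)) = Re (ip x (R *\<^sub>v x))"
    by (metis Re_complex_of_real)
  also have "\<dots> \<le> cmod (ip x (R *\<^sub>v x))" by (rule complex_Re_le_cmod)
  also have "\<dots> \<le> sqrt (nsq x * nsq (R *\<^sub>v x))"
    using cauchy_schwarz[OF x, of "R *\<^sub>v x"] Rc x by (intro real_le_rsqrt) simp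
  also have "\<dots> = vnorm x * vnorm (R *\<^sub>v x)" unfolding vnorm_nsq by (simp add: real_sqrt_mult)
  also have "\<dots> \<le> vnorm x * (opnorm R * vnorm x)"
    by (rule mult_left_mono[OF opnorm_bound[OF Rc x]]) (simp add: vnorm_nsq nsq_nonneg)
  also have "\<dots> = opnorm R * nsq x"
    unfolding vnorm_nsq using nsq_nonneg[of x] by (simp add: ac_simps)
  finally show ?thesis .
qed

theorem theorem2:
  fixes D N n :: nat and psi :: "complex vec"
    and A B :: "nat \<Rightarrow> complex mat"
  assumes psi: "psi \<in> carrier_vec (D * D)"
    and A: "\<And>k. k \<in> {1..N} \<Longrightarrow> A k \<in> carrier_mat D D"
    and B: "\<And>k. k \<in> {1..N} \<Longrightarrow> B k \<in> carrier_mat D D"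
    and n: "1 \<le> n" "n \<le> D"
  shows "(\<Sum>k=1..N. chi n (ptrace_A D D
            (kron (A k) (B k) * outer psi * adj (kron (A k) (B k)))))
         \<le> opnorm (msum (D * D) (\<lambda>k. kron (adj (A k) * A k) (adj (B k) * B k)) {1..N})
           * chi n (ptrace_A D D (outer psi))"
proof -
  define rho where "rho = ptrace_A D D (outer psi)"
  obtain u lam S where u: "orthonormal D D u"
    and ev: "\<forall>j<D. rho *\<^sub>v u j = complex_of_real (lam j) \<cdot>\<^sub>v u j"
    and S: "S \<subseteq> {..<D}" "card S = n" and chi_rho: "chi n rho = (\<Sum>j\<in>S. lam j)"
    using chi_spec[OF herm_ptrace[OF psi] n(2)] unfolding rho_def by blast
  define eta where "eta = low_part D u S psi"
  have "(\<Sum>k=1..N. chi n (ptrace_A D D (kron (A k) (B k) * outer psi * adj (kron (A k) (B k)))))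
      \<le> (\<Sum>k=1..N. nsq (kron (A k) (B k) *\<^sub>v eta))"
    unfolding eta_def using chi_conj_le_low_part[OF A B u S psi n] by (intro sum_mono) auto
  also have "\<dots> \<le> opnorm (msum (D * D) (\<lambda>k. kron (adj (A k) * A k) (adj (B k) * B k)) {1..N}) * nsq eta"
    unfolding eta_def by (rule sum_nsq_kron_le_opnorm[OF finite_atLeastAtMost low_part_carrier A B])
  also have "nsq eta = chi n rho"
    unfolding eta_def chi_rho using nsq_low_part[OF psi u S(1)] ev unfolding rho_def by simp
  finally show ?thesis unfolding rho_def .
qed

end
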